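(* For every $\varepsilon,\delta\in(0,1)$ and $n,r\in\mathbb{N}$, define \[ \varepsilon_0=\frac{\varepsilon}{\sqrt{8r\log(2/\delta)}},\qquad\delta_0=\frac{\delta}{2r},\qquad\lambda^*=\lambda^*(n,\varepsilon_0,\delta_0). \] Then for every $\lambda\ge\lambda^*$, the real-sum protocol $P^{\mathbb{R}}_{n,\lambda,r}$ is $(\varepsilon,\delta)$-differentially private in the shuffled model.
   Context: Differential privacy: an algorithm $M$ on datasets is $(\varepsilon,\delta)$-differentially private if for all datasets $X,X'$ differing in one user's entry and every output set $T$, $\Pr[M(X)\in T]\le e^\varepsilon\Pr[M(X')\in T]+\delta$; a shuffled protocol is $(\varepsilon,\delta)$-differentially private if the map from users' data to the uniformly randomly permuted multiset of all messages is. Bit randomizer $R^{0/1}_{n,\lambda}(b)$, $b\in\{0,1\}$: draw $\mathbf{b}\sim\mathrm{Ber}(\lambda/n)$; output $b$ if $\mathbf{b}=0$, a fresh $\mathrm{Ber}(1/2)$ bit if $\mathbf{b}=1$. The bit-sum protocol with $n$ users has each user send $R^{0/1}_{n,\lambda}(x_i)$ for $x_i\in\{0,1\}$. $\lambda^*(n,\varepsilon,\delta)$ is the minimum value of $\lambda$ such that the bit-sum protocol with $n$ users is $(\varepsilon,\delta)$-differentially private in the shuffled model. Encoder $E_r(x)$, $x\in[0,1]$: $\mu=\lceil xr\rceil$, $p=xr-\mu+1$, and $b_j=1$ for $j<\mu$, $b_j\sim\mathrm{Ber}(p)$ for $j=\mu$, $b_j=0$ for $j>\mu$ ($j=1,\dots,r$).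 Real-sum protocol $P^{\mathbb{R}}_{n,\lambda,r}$: user $i$ computes $(b_{i,1},\dots,b_{i,r})=E_r(x_i)$ and sends the $r$ messages $R^{0/1}_{n,\lambda}(b_{i,j})$ (independent randomness); all $nr$ messages are shuffled; the analyzer outputs $\frac1r\cdot\frac{n}{n-\lambda}(\sum_{i,j}y_{i,j}-\frac{\lambda r}{2})$. $\log$ is the natural logarithm. *)

theory Defs
  imports "HOL-Probability.Probability"
begin

fun list_pmf :: "'a pmf list \<Rightarrow> 'a list pmf" where
  "list_pmf [] = return_pmf []"
| "list_pmf (p # ps) = bind_pmf p (\<lambda>x. bind_pmf (list_pmf ps) (\<lambda>xs. return_pmf (x # xs)))"

definition dp :: "real \<Rightarrow> real \<Rightarrow> nat \<Rightarrow> 'a set \<Rightarrow> ('a list \<Rightarrow> 'b pmf) \<Rightarrow> bool" where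
  "dp eps del n D M \<longleftrightarrow>
     (\<forall>X X'. length X = n \<longrightarrow> length X' = n \<longrightarrow> set X \<subseteq> D \<longrightarrow> set X' \<subseteq> D \<longrightarrow>
        card {i. i < n \<and> X ! i \<noteq> X' ! i} \<le> 1 \<longrightarrow>
        (\<forall>T. measure_pmf.prob (M X) T \<le> exp eps * measure_pmf.prob (M X') T + del))"

text \<open>Bit randomizer R^{0/1}_{n,lambda} (bits: True = 1, False = 0).\<close>
definition bit_rand :: "nat \<Rightarrow> real \<Rightarrow> bool \<Rightarrow> bool pmf" where
  "bit_rand n lam b = bind_pmf (bernoulli_pmf (lam / real n))
      (\<lambda>c. if c then bernoulli_pmf (1/2) else return_pmf b)"

text \<open>Shuffled output of the bit-sum protocol: the multiset of all messages.\<close>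
definition bitsum_shuffled :: "nat \<Rightarrow> real \<Rightarrow> bool list \<Rightarrow> bool multiset pmf" where
  "bitsum_shuffled n lam X = map_pmf mset (list_pmf (map (bit_rand n lam) X))"

definition lambda_star :: "nat \<Rightarrow> real \<Rightarrow> real \<Rightarrow> real" where
  "lambda_star n eps del =
     Inf {lam. 0 \<le> lam \<and> lam \<le> real n \<and> dp eps del n UNIV (bitsum_shuffled n lam)}"

definition encoder :: "nat \<Rightarrow> real \<Rightarrow> bool list pmf" where
  "encoder r x =
     (let mu = \<lceil>x * real r\<rceil>; p = x * real r - of_int mu + 1 in
      list_pmf (map (\<lambda>j. if int j < mu then return_pmf True
                          else if int j = mu then bernoulli_pmf p
                          else return_pmf False) [1..<r+1]))"

definition realsum_user :: "nat \<Rightarrow> real \<Rightarrow> nat \<Rightarrow> real \<Rightarrow> bool list pmf" where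
  "realsum_user n lam r x = bind_pmf (encoder r x) (\<lambda>bs. list_pmf (map (bit_rand n lam) bs))"

definition realsum_shuffled :: "nat \<Rightarrow> real \<Rightarrow> nat \<Rightarrow> real list \<Rightarrow> bool multiset pmf" where
  "realsum_shuffled n lam r X =
     map_pmf (\<lambda>ys. mset (concat ys)) (list_pmf (map (realsum_user n lam r) X))"

text \<open>Analyzer of P^R_{n,lambda,r} (post-processing; not needed for privacy).\<close>
definition realsum_analyzer :: "nat \<Rightarrow> real \<Rightarrow> nat \<Rightarrow> bool multiset \<Rightarrow> real" where
  "realsum_analyzer n lam r M =
     (1 / real r) * (real n / (real n - lam)) * (real (count M True) - lam * real r / 2)"

end

theory Submission
  imports Defs "HOL-Probability.Hoeffding"
begin

text \<open>Each of the r encoder bits of every user is randomized independently, so the shuffled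
  output is the sum of r column multisets, column j being an output of the bit-sum protocol on
  the j-th bits of all users. Coupling the encoders of users with equal inputs, neighbouring
  datasets give columns whose inputs differ in at most one user; each column is then
  (\<epsilon>0, \<delta>0)-private, because privacy of the bit-sum protocol is monotone in \<lambda> and closed at
  the infimum \<lambda>*. Advanced composition over the r columns follows from a Chernoff bound on the
  privacy loss L, whose exponential moment is controlled by Hoeffding's lemma: the result is
  (\<epsilon>, r \<delta>0 + exp (-t \<epsilon>) E[exp (t L)])-privacy, which the choice of \<epsilon>0, \<delta>0 and t makes at
  most \<delta>.\<close>

section \<open>Independent products of distributions on lists\<close>

lemma list_pmf_Cons_pair:
  "list_pmf (p # ps) = map_pmf (\<lambda>(x, xs). x # xs) (pair_pmf p (list_pmf ps))"
  by (simp add: pair_pmf_def map_bind_pmf)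

lemma list_all2_set_list_pmf:
  "xs \<in> set_pmf (list_pmf ps) \<Longrightarrow> list_all2 (\<lambda>x p. x \<in> set_pmf p) xs ps"
  by (induction ps arbitrary: xs) auto

lemma length_of_set_list_pmf: "xs \<in> set_pmf (list_pmf ps) \<Longrightarrow> length xs = length ps"
  using list_all2_set_list_pmf list_all2_lengthD by blast

lemma nth_of_set_list_pmf:
  "xs \<in> set_pmf (list_pmf ps) \<Longrightarrow> i < length ps \<Longrightarrow> xs ! i \<in> set_pmf (ps ! i)"
  using list_all2_set_list_pmf list_all2_nthD2 by blast

lemma pmf_list_pmf_Cons: "pmf (list_pmf (p # ps)) (x # xs) = pmf p x * pmf (list_pmf ps) xs"
proof -
  have inj: "inj (\<lambda>(x :: 'a, xs). x # xs)" by (auto simp: inj_def)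
  have "pmf (list_pmf (p # ps)) (x # xs) =
      pmf (map_pmf (\<lambda>(x, xs). x # xs) (pair_pmf p (list_pmf ps))) ((\<lambda>(x, xs). x # xs) (x, xs))"
    by (simp only: list_pmf_Cons_pair) simp
  also have "\<dots> = pmf p x * pmf (list_pmf ps) xs"
    by (simp only: pmf_map_inj'[OF inj] pmf_pair)
  finally show ?thesis .
qed

lemma pmf_list_pmf_replicate: "pmf (list_pmf (replicate n p)) (replicate n x) = pmf p x ^ n"
  by (induction n) (simp_all only: replicate.simps pmf_list_pmf_Cons, simp_all)

lemma list_pmf_map_pmf: "list_pmf (map (map_pmf f) ps) = map_pmf (map f) (list_pmf ps)"
  by (induction ps) (simp_all add: map_bind_pmf bind_map_pmf)

lemma list_pmf_map_return: "list_pmf (map return_pmf xs) = return_pmf xs"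
  by (induction xs) (simp_all add: bind_return_pmf)

lemma list_pmf_map_bind:
  "list_pmf (map (\<lambda>x. bind_pmf (P x) (G x)) xs) =
     bind_pmf (list_pmf (map P xs)) (\<lambda>ys. list_pmf (map2 G xs ys))"
proof (induction xs)
  case (Cons x xs)
  show ?case
    by (simp add: Cons bind_assoc_pmf bind_return_pmf bind_commute_pmf[of "G x _"])
qed (simp add: bind_return_pmf)

lemma list_pmf_map2_pair:
  "length ps = length qs \<Longrightarrow>
   list_pmf (map2 pair_pmf ps qs) = map_pmf (\<lambda>(xs, ys). zip xs ys) (pair_pmf (list_pmf ps) (list_pmf qs))"
proof (induction ps qs rule: list_induct2)
  case (Cons p ps q qs)
  show ?case
    apply (simp only: list_pmf.simps list.map prod.case zip_Cons_Cons Cons.IH)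
    apply (simp add: pair_pmf_def bind_assoc_pmf bind_return_pmf map_bind_pmf)
    apply (subst bind_commute_pmf[of q])
    apply (simp add: bind_assoc_pmf bind_return_pmf)
    done
qed (simp add: pair_return_pmf1)

section \<open>Indistinguishability\<close>

definition indist :: "real \<Rightarrow> real \<Rightarrow> 'a pmf \<Rightarrow> 'a pmf \<Rightarrow> bool" where
  "indist e d p q \<longleftrightarrow> (\<forall>T. measure_pmf.prob p T \<le> exp e * measure_pmf.prob q T + d)"

definition adjacent :: "nat \<Rightarrow> 'a list \<Rightarrow> 'a list \<Rightarrow> bool" where
  "adjacent n X X' \<longleftrightarrow> length X = n \<and> length X' = n \<and> card {i. i < n \<and> X ! i \<noteq> X' ! i} \<le> 1"

lemma dp_iff_indist:
  "dp e d n D M \<longleftrightarrow>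
     (\<forall>X X'. adjacent n X X' \<longrightarrow> set X \<subseteq> D \<longrightarrow> set X' \<subseteq> D \<longrightarrow> indist e d (M X) (M X'))"
  by (auto simp: dp_def adjacent_def indist_def)

lemma adjacent_of_agree:
  assumes "adjacent n X X'" "length Y = n" "length Y' = n"
    and "\<And>i. i < n \<Longrightarrow> X ! i = X' ! i \<Longrightarrow> Y ! i = Y' ! i"
  shows "adjacent n Y Y'"
proof -
  have "{i. i < n \<and> Y ! i \<noteq> Y' ! i} \<subseteq> {i. i < n \<and> X ! i \<noteq> X' ! i}"
    using assms(4) by auto
  then have "card {i. i < n \<and> Y ! i \<noteq> Y' ! i} \<le> card {i. i < n \<and> X ! i \<noteq> X' ! i}"
    by (intro card_mono) auto
  then show ?thesis using assms(1-3) by (simp add: adjacent_def)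
qed

lemma adjacent_sym:
  assumes "adjacent n X X'"
  shows "adjacent n X' X"
proof -
  have "{i. i < n \<and> X' ! i \<noteq> X ! i} = {i. i < n \<and> X ! i \<noteq> X' ! i}" by auto
  then show ?thesis using assms by (simp add: adjacent_def)
qed

lemma adjacent_map: "adjacent n X X' \<Longrightarrow> adjacent n (map f X) (map f X')"
  by (rule adjacent_of_agree) (auto simp: adjacent_def)

lemma dp_const:
  assumes "\<And>X X'. length X = n \<Longrightarrow> length X' = n \<Longrightarrow> M X = M X'" "0 \<le> e" "0 \<le> d"
  shows "dp e d n D M"
  unfolding dp_def
proof (intro allI impI)
  fix X X' :: "'a list" and T
  assume "length X = n" "length X' = n"
  then have "M X = M X'" by (rule assms(1))
  moreover have "1 * measure_pmf.prob (M X') T \<le> exp e * measure_pmf.prob (M X') T"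
    using assms(2) by (intro mult_right_mono) auto
  ultimately show "measure_pmf.prob (M X) T \<le> exp e * measure_pmf.prob (M X') T + d"
    using assms(3) by simp
qed

lemma indist_map_pmf: "indist e d p q \<Longrightarrow> indist e d (map_pmf f p) (map_pmf f q)"
  by (simp add: indist_def)

lemma indist_mono: "indist e d p q \<Longrightarrow> d \<le> d' \<Longrightarrow> indist e d' p q"
  unfolding indist_def by (meson add_left_mono order_trans)

lemma dp_mono: "dp e d n D M \<Longrightarrow> d \<le> d' \<Longrightarrow> dp e d' n D M"
  by (meson dp_iff_indist indist_mono)

lemma measure_bind_pmf:
  "measure_pmf.prob (bind_pmf p F) T = measure_pmf.expectation p (\<lambda>x. measure_pmf.prob (F x) T)"
proof -
  have int: "integrable (measure_pmf p) (\<lambda>x. measure_pmf.prob (F x) T)"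
    by (rule measure_pmf.integrable_const_bound[where B = 1]) auto
  have "ennreal (measure_pmf.prob (bind_pmf p F) T) = (\<integral>\<^sup>+x. emeasure (measure_pmf (F x)) T \<partial>p)"
    by (simp only: measure_pmf.emeasure_eq_measure[symmetric] emeasure_bind_pmf)
  also have "\<dots> = (\<integral>\<^sup>+x. ennreal (measure_pmf.prob (F x) T) \<partial>p)"
    by (simp add: measure_pmf.emeasure_eq_measure)
  also have "\<dots> = ennreal (measure_pmf.expectation p (\<lambda>x. measure_pmf.prob (F x) T))"
    by (rule nn_integral_eq_integral[OF int]) auto
  finally show ?thesis
    by (subst (asm) ennreal_inj) (auto intro: Bochner_Integration.integral_nonneg)
qed

lemma indist_bind_coupling:
  assumes "\<And>z. z \<in> set_pmf \<pi> \<Longrightarrow> indist e d (F (fst z)) (G (snd z))"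
  shows "indist e d (bind_pmf (map_pmf fst \<pi>) F) (bind_pmf (map_pmf snd \<pi>) G)"
  unfolding indist_def
proof
  fix T
  have int_F: "integrable (measure_pmf \<pi>) (\<lambda>z. measure_pmf.prob (F (fst z)) T)"
    by (rule measure_pmf.integrable_const_bound[where B = 1]) auto
  have int_G: "integrable (measure_pmf \<pi>) (\<lambda>z. measure_pmf.prob (G (snd z)) T)"
    by (rule measure_pmf.integrable_const_bound[where B = 1]) auto
  have "measure_pmf.prob (bind_pmf (map_pmf fst \<pi>) F) T =
      measure_pmf.expectation \<pi> (\<lambda>z. measure_pmf.prob (F (fst z)) T)"
    by (simp add: bind_map_pmf measure_bind_pmf)
  also have "\<dots> \<le> measure_pmf.expectation \<pi> (\<lambda>z. exp e * measure_pmf.prob (G (snd z)) T + d)"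
    using assms unfolding indist_def
    by (intro integral_mono_AE int_F) (auto simp: AE_measure_pmf_iff int_G)
  also have "\<dots> = exp e * measure_pmf.prob (bind_pmf (map_pmf snd \<pi>) G) T + d"
    using int_G by (simp add: bind_map_pmf measure_bind_pmf measure_pmf.prob_space)
  finally show "measure_pmf.prob (bind_pmf (map_pmf fst \<pi>) F) T \<le>
      exp e * measure_pmf.prob (bind_pmf (map_pmf snd \<pi>) G) T + d" .
qed

section \<open>Advanced composition\<close>

lemma sub_one_mult_ln_le:
  fixes u e :: real
  assumes "0 < u" "u \<le> exp e" "1 \<le> exp e * u"
  shows "(u - 1) * ln u \<le> (exp e - 1) * e"
proof (cases "1 \<le> u")
  case True
  have "ln u \<le> e" using assms by (metis ln_exp ln_le_cancel_iff exp_gt_zero)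
  moreover have "0 \<le> ln u" using True by simp
  moreover have "0 \<le> e" using True assms(2) one_le_exp_iff by fastforce
  ultimately show ?thesis
    using True assms(2) by (intro mult_mono) auto
next
  case False
  have ln_bound: "- ln u \<le> e"
    using assms ln_le_cancel_iff[of 1 "exp e * u"] by (simp add: ln_mult)
  have diff_bound: "1 - u \<le> exp e - 1"
  proof -
    have "exp e * (1 - u) \<le> exp e * (exp e - 1) - (exp e - 1)\<^sup>2"
      using assms(3) by (simp add: power2_eq_square algebra_simps)
    then have "exp e * (1 - u) \<le> exp e * (exp e - 1)" using zero_le_power2[of "exp e - 1"] by linarith
    then show ?thesis by simp
  qed
  have "ln u < 0" using False assms(1) by (intro ln_less_zero) auto
  have "(u - 1) * ln u = (1 - u) * - ln u" by (simp add: algebra_simps)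
  also have "\<dots> \<le> (exp e - 1) * e"
    using ln_bound diff_bound \<open>ln u < 0\<close> by (intro mult_mono) auto
  finally show ?thesis .
qed

lemma mult_ln_div_le:
  fixes a b e :: real
  assumes "0 < a" "0 < b" "a \<le> exp e * b" "b \<le> exp e * a"
  shows "a * ln (a / b) \<le> a - b + e * (exp e - 1) * a"
proof -
  have "b * ln (a / b) \<le> b * (a / b - 1)"
    using assms by (intro mult_left_mono ln_le_minus_one) auto
  also have "\<dots> = a - b" using assms by (simp add: field_simps)
  finally have 1: "b * ln (a / b) \<le> a - b" .
  have "(b / a - 1) * ln (b / a) \<le> (exp e - 1) * e"
    using assms by (intro sub_one_mult_ln_le) (auto simp: field_simps)
  then have "a * ((b / a - 1) * ln (b / a)) \<le> a * ((exp e - 1) * e)"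
    using assms by (intro mult_left_mono) auto
  moreover have "(a - b) * ln (a / b) = a * ((b / a - 1) * ln (b / a))"
    using assms by (simp add: ln_div field_simps)
  ultimately have 2: "(a - b) * ln (a / b) \<le> e * (exp e - 1) * a" by (simp add: algebra_simps)
  have "a * ln (a / b) = b * ln (a / b) + (a - b) * ln (a / b)" by (simp add: algebra_simps)
  with 1 2 show ?thesis by linarith
qed

lemma sum_mult_ln_div_le:
  fixes A B :: "'a \<Rightarrow> real"
  assumes "\<And>x. x \<in> S \<Longrightarrow> 0 < A x \<and> 0 < B x \<and> A x \<le> exp e * B x \<and> B x \<le> exp e * A x"
    and "sum A S \<le> sum B S"
  shows "(\<Sum>x\<in>S. A x * ln (A x / B x)) \<le> e * (exp e - 1) * sum A S"
proof -
  have "(\<Sum>x\<in>S. A x * ln (A x / B x)) \<le> (\<Sum>x\<in>S. A x - B x + e * (exp e - 1) * A x)"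
    using assms(1) by (intro sum_mono mult_ln_div_le) auto
  also have "\<dots> \<le> e * (exp e - 1) * sum A S"
    using assms(2) by (simp add: sum.distrib sum_subtractf sum_distrib_left[symmetric])
  finally show ?thesis .
qed

lemma hoeffding_lemma_sum:
  fixes w f :: "'a \<Rightarrow> real"
  assumes S: "finite S" and w0: "\<And>x. x \<in> S \<Longrightarrow> 0 \<le> w x" and w1: "sum w S = 1"
    and ab: "\<And>x. x \<in> S \<Longrightarrow> a \<le> f x \<and> f x \<le> b" and l: "0 < l"
  shows "(\<Sum>x\<in>S. w x * exp (l * (f x - (\<Sum>y\<in>S. w y * f y)))) \<le> exp (l\<^sup>2 * (b - a)\<^sup>2 / 8)"
proof -
  define w' where "w' = (\<lambda>x. if x \<in> S then w x else 0)"
  have w'0: "\<And>x. 0 \<le> w' x" using w0 by (auto simp: w'_def)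
  have int1: "(\<integral>\<^sup>+x. ennreal (w' x) \<partial>count_space UNIV) = 1"
    using S w1 by (subst nn_integral_count_space'[of S])
      (auto simp: w'_def sum_ennreal[symmetric] w0 intro!: sum.cong)
  define P where "P = embed_pmf w'"
  have pmfP: "pmf P x = w' x" for x
    unfolding P_def by (rule pmf_embed_pmf[OF w'0 int1])
  have setP: "set_pmf P \<subseteq> S" by (auto simp: set_pmf_eq pmfP w'_def)
  interpret interval_bounded_random_variable "measure_pmf P" f a b
    by unfold_locales (use setP ab in \<open>auto simp: AE_measure_pmf_iff\<close>)
  have E: "measure_pmf.expectation P f = (\<Sum>y\<in>S. w y * f y)"
    using integral_measure_pmf[OF S, of P f] setP by (auto simp: pmfP w'_def intro!: sum.cong)
  have "(\<integral>\<^sup>+x. ennreal (exp (l * (f x - measure_pmf.expectation P f))) \<partial>measure_pmf P) \<le>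
      ennreal (exp (l\<^sup>2 * (b - a)\<^sup>2 / 8))"
    by (rule Hoeffdings_lemma_nn_integral[OF l])
  also have "(\<integral>\<^sup>+x. ennreal (exp (l * (f x - measure_pmf.expectation P f))) \<partial>measure_pmf P) =
      (\<Sum>x\<in>S. ennreal (exp (l * (f x - measure_pmf.expectation P f))) * pmf P x)"
    using setP by (subst nn_integral_measure_pmf_support[of S]) (auto simp: S)
  also have "\<dots> = ennreal (\<Sum>x\<in>S. w x * exp (l * (f x - (\<Sum>y\<in>S. w y * f y))))"
    by (subst sum_ennreal[symmetric])
      (auto simp: pmfP w'_def E w0 ennreal_mult'[symmetric] mult.commute intro!: sum.cong)
  finally show ?thesis by (subst (asm) ennreal_le_iff) auto
qed

lemma weighted_sum_exp_le:
  fixes w f :: "'a \<Rightarrow> real"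
  assumes "finite S" "\<And>x. x \<in> S \<Longrightarrow> 0 \<le> w x" "sum w S = 1"
    and "\<And>x. x \<in> S \<Longrightarrow> \<bar>f x\<bar> \<le> e" "(\<Sum>x\<in>S. w x * f x) \<le> \<mu>" "0 \<le> t"
  shows "(\<Sum>x\<in>S. w x * exp (t * f x)) \<le> exp (t * \<mu> + t\<^sup>2 * e\<^sup>2 / 2)"
proof (cases "t = 0")
  case True
  then show ?thesis using assms(3) by simp
next
  case False
  define m where "m = (\<Sum>x\<in>S. w x * f x)"
  have "- e \<le> f x \<and> f x \<le> e" if "x \<in> S" for x
    using assms(4)[OF that] by linarith
  then have "(\<Sum>x\<in>S. w x * exp (t * (f x - m))) \<le> exp (t\<^sup>2 * (e - - e)\<^sup>2 / 8)"
    unfolding m_def using assms False by (intro hoeffding_lemma_sum) auto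
  then have "exp (t * m) * (\<Sum>x\<in>S. w x * exp (t * (f x - m))) \<le> exp (t * m) * exp (t\<^sup>2 * e\<^sup>2 / 2)"
    by (simp add: power2_eq_square algebra_simps)
  moreover have "exp (t * m) * (\<Sum>x\<in>S. w x * exp (t * (f x - m))) = (\<Sum>x\<in>S. w x * exp (t * f x))"
    by (simp add: sum_distrib_left right_diff_distrib exp_diff)
  ultimately have "(\<Sum>x\<in>S. w x * exp (t * f x)) \<le> exp (t * m) * exp (t\<^sup>2 * e\<^sup>2 / 2)"
    by simp
  also have "\<dots> \<le> exp (t * \<mu>) * exp (t\<^sup>2 * e\<^sup>2 / 2)"
    using assms(5,6) by (intro mult_right_mono) (auto simp: m_def mult_left_mono)
  also have "\<dots> = exp (t * \<mu> + t\<^sup>2 * e\<^sup>2 / 2)" by (simp add: exp_add)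
  finally show ?thesis .
qed

text \<open>For a, b > 0 this is a (a / b) ^ t, so summing it over A and B gives the t-th exponential
  moment of the privacy loss ln (A / B) under A; with powr it vanishes when a = 0 or b = 0.\<close>
definition loss_moment :: "real \<Rightarrow> real \<Rightarrow> real \<Rightarrow> real" where
  "loss_moment t a b = a powr (1 + t) / b powr t"

lemma loss_moment_nonneg: "0 \<le> loss_moment t a b"
  by (simp add: loss_moment_def)

lemma loss_moment_zero [simp]: "loss_moment t 0 b = 0"
  by (simp add: loss_moment_def)

lemma loss_moment_same: "0 \<le> a \<Longrightarrow> loss_moment t a a = a"
  by (cases "a = 0") (simp_all add: loss_moment_def powr_add)

lemma loss_moment_mult:
  "0 \<le> a \<Longrightarrow> 0 \<le> a' \<Longrightarrow> 0 \<le> b \<Longrightarrow> 0 \<le> b' \<Longrightarrow>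
   loss_moment t (a * a') (b * b') = loss_moment t a b * loss_moment t a' b'"
  by (simp add: loss_moment_def powr_mult)

lemma loss_moment_eq_exp:
  "0 < a \<Longrightarrow> 0 < b \<Longrightarrow> loss_moment t a b = a * exp (t * ln (a / b))"
  by (simp add: loss_moment_def powr_def ln_div exp_add exp_diff algebra_simps)

lemma le_loss_moment:
  fixes a b e t :: real
  assumes "0 \<le> a" "0 \<le> b" "0 < a \<Longrightarrow> 0 < b" "0 \<le> t"
  shows "a \<le> exp e * b + exp (- t * e) * loss_moment t a b"
proof (cases "exp e * b < a")
  case True
  moreover have "0 \<le> exp e * b" using assms(2) by simp
  ultimately have pos: "0 < a" "0 < b" using assms(3) by linarith+
  have "e \<le> ln (a / b)"
    using True pos by (subst ln_ge_iff) (auto simp: field_simps)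
  then have "exp (t * e) \<le> exp (t * ln (a / b))"
    using assms(4) by (simp add: mult_left_mono)
  then have "a * 1 \<le> a * (exp (- t * e) * exp (t * ln (a / b)))"
    using pos by (intro mult_left_mono) (simp_all add: exp_minus field_simps)
  then have "a \<le> exp (- t * e) * (a * exp (t * ln (a / b)))" by (simp add: mult.left_commute)
  moreover have "0 \<le> exp e * b" using pos by simp
  ultimately show ?thesis unfolding loss_moment_eq_exp[OF pos] by linarith
next
  case False
  moreover have "0 \<le> exp (- t * e) * loss_moment t a b" by (simp add: loss_moment_nonneg)
  ultimately show ?thesis by linarith
qed

lemma abs_ln_div_le:
  fixes a b e :: real
  assumes "0 < a" "0 < b" "a \<le> exp e * b" "b \<le> exp e * a"
  shows "\<bar>ln (a / b)\<bar> \<le> e"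
proof -
  have "ln a \<le> e + ln b" "ln b \<le> e + ln a"
    using assms ln_le_cancel_iff[of a "exp e * b"] ln_le_cancel_iff[of b "exp e * a"]
    by (simp_all add: ln_mult)
  then show ?thesis using assms by (simp add: ln_div)
qed

text \<open>The privacy loss ln (A / B) lies in [-e, e] and its mean under A is at most e (exp e - 1),
  so Hoeffding's lemma applies.\<close>
lemma sum_loss_moment_le:
  fixes A B :: "'a \<Rightarrow> real"
  assumes S: "finite S" and A0: "\<And>x. 0 \<le> A x"
    and AB: "\<And>x. A x \<le> exp e * B x" and BA: "\<And>x. B x \<le> exp e * A x"
    and mass: "sum A S \<le> sum B S" and t: "0 \<le> t"
  shows "(\<Sum>x\<in>S. loss_moment t (A x) (B x)) \<le> sum A S * exp (t * e * (exp e - 1) + t\<^sup>2 * e\<^sup>2 / 2)"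
proof -
  define S' where "S' = {x\<in>S. 0 < A x}"
  define m where "m = sum A S"
  have pos: "0 < A x" "0 < B x" if "x \<in> S'" for x
  proof -
    show "0 < A x" using that by (simp add: S'_def)
    then have "0 < exp e * B x" using AB[of x] by linarith
    then show "0 < B x" by (simp add: zero_less_mult_iff)
  qed
  have zero: "A x = 0" "B x = 0" if "x \<in> S - S'" for x
    using that A0[of x] BA[of x] AB[of x] by (auto simp: S'_def zero_le_mult_iff)
  have S'S: "S' \<subseteq> S" by (auto simp: S'_def)
  have mass_S': "sum A S' = m" "sum B S' = sum B S"
    unfolding m_def using S S'S zero by (auto intro: sum.mono_neutral_left)
  have moment_S': "(\<Sum>x\<in>S. loss_moment t (A x) (B x)) = (\<Sum>x\<in>S'. A x * exp (t * ln (A x / B x)))"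
  proof -
    have "(\<Sum>x\<in>S. loss_moment t (A x) (B x)) = (\<Sum>x\<in>S'. loss_moment t (A x) (B x))"
      using S S'S zero by (intro sum.mono_neutral_right) auto
    also have "\<dots> = (\<Sum>x\<in>S'. A x * exp (t * ln (A x / B x)))"
      using pos by (intro sum.cong) (auto simp: loss_moment_eq_exp)
    finally show ?thesis .
  qed
  show ?thesis
  proof (cases "m = 0")
    case True
    then have "S' = {}"
      using S A0 by (auto simp: S'_def m_def sum_nonneg_eq_0_iff)
    then show ?thesis by (simp add: moment_S' m_def[symmetric] True)
  next
    case False
    then have m: "0 < m" using A0 by (simp add: m_def less_le sum_nonneg)
    have "(\<Sum>x\<in>S'. A x * ln (A x / B x)) \<le> e * (exp e - 1) * sum A S'"
      by (rule sum_mult_ln_div_le) (use pos AB BA mass mass_S' in \<open>auto simp: m_def\<close>)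
    then have mean: "(\<Sum>x\<in>S'. A x / m * ln (A x / B x)) \<le> e * (exp e - 1)"
      using m mass_S' by (simp add: sum_divide_distrib[symmetric] divide_le_eq)
    have "(\<Sum>x\<in>S'. A x / m * exp (t * ln (A x / B x))) \<le> exp (t * (e * (exp e - 1)) + t\<^sup>2 * e\<^sup>2 / 2)"
    proof (rule weighted_sum_exp_le[OF _ _ _ _ mean t])
      show "finite S'" using S S'S by (rule finite_subset[rotated])
      show "sum (\<lambda>x. A x / m) S' = 1" using m mass_S' by (simp add: sum_divide_distrib[symmetric])
    qed (use m A0 pos AB BA abs_ln_div_le in auto)
    then have "m * (\<Sum>x\<in>S'. A x / m * exp (t * ln (A x / B x))) \<le>
        m * exp (t * e * (exp e - 1) + t\<^sup>2 * e\<^sup>2 / 2)"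
      using m by (intro mult_left_mono) (auto simp: mult.assoc)
    then show ?thesis
      using m by (simp add: moment_S' sum_distrib_left m_def[symmetric])
  qed
qed

lemma sum_min_pmf_ge:
  assumes S: "finite S" "set_pmf p \<subseteq> S" and pq: "indist e d p q"
  shows "1 - d \<le> (\<Sum>x\<in>S. min (pmf p x) (exp e * pmf q x))"
proof -
  define R where "R = {x\<in>S. exp e * pmf q x < pmf p x}"
  have R: "finite R" "R \<subseteq> S" using S by (auto simp: R_def)
  have "(\<Sum>x\<in>R. pmf p x - exp e * pmf q x) =
      (\<Sum>x\<in>S. if exp e * pmf q x < pmf p x then pmf p x - exp e * pmf q x else 0)"
    using S by (simp add: R_def sum.inter_filter)
  moreover have "min a b = a - (if b < a then a - b else 0)" for a b :: real
    by (simp add: min_def)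
  ultimately have "(\<Sum>x\<in>S. min (pmf p x) (exp e * pmf q x)) =
      (\<Sum>x\<in>S. pmf p x) - (\<Sum>x\<in>R. pmf p x - exp e * pmf q x)"
    by (simp only: sum_subtractf)
  also have "(\<Sum>x\<in>S. pmf p x) = 1" using S by (simp add: sum_pmf_eq_1)
  also have "(\<Sum>x\<in>R. pmf p x - exp e * pmf q x) = measure_pmf.prob p R - exp e * measure_pmf.prob q R"
    using R by (simp add: sum_subtractf sum_distrib_left measure_measure_pmf_finite)
  finally show ?thesis using pq[unfolded indist_def, rule_format, of R] by simp
qed

lemma exists_between_sum_eq:
  fixes L U :: "'a \<Rightarrow> real"
  assumes LU: "\<And>x. L x \<le> U x" and m: "sum L S \<le> m" "m \<le> sum U S"
  obtains A where "\<And>x. L x \<le> A x" "\<And>x. A x \<le> U x" "sum A S = m"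
proof -
  define c where "c = (if sum U S = sum L S then 0 else (sum U S - m) / (sum U S - sum L S))"
  have c: "0 \<le> c" "c \<le> 1" "c * (sum U S - sum L S) = sum U S - m"
    using m by (auto simp: c_def divide_le_eq_1)
  show ?thesis
  proof (rule that[of "\<lambda>x. U x - c * (U x - L x)"])
    show "L x \<le> U x - c * (U x - L x)" for x
      using c mult_left_le_one_le[of "U x - L x" c] LU[of x] by linarith
    show "U x - c * (U x - L x) \<le> U x" for x
      using c LU[of x] by simp
    show "(\<Sum>x\<in>S. U x - c * (U x - L x)) = m"
      using c by (simp add: sum_subtractf sum_distrib_left[symmetric])
  qed
qed

text \<open>The cores are min p (exp e q) and min q (exp e p); if the first has the larger mass, it is
  lowered towards exp (-e) times the second.\<close>
lemma indist_pure_core: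
  assumes S: "finite S" "set_pmf p \<subseteq> S" "set_pmf q \<subseteq> S"
    and pq: "indist e d p q" and qp: "indist e d q p" and e: "0 \<le> e"
  obtains A B where "\<And>x. 0 \<le> A x \<and> A x \<le> pmf p x" "\<And>x. 0 \<le> B x \<and> B x \<le> pmf q x"
    "\<And>x. A x \<le> exp e * B x" "\<And>x. B x \<le> exp e * A x" "sum A S \<le> sum B S" "1 - d \<le> sum A S"
proof -
  define A0 where "A0 x = min (pmf p x) (exp e * pmf q x)" for x
  define B0 where "B0 x = min (pmf q x) (exp e * pmf p x)" for x
  have grow: "y \<le> exp e * (exp e * y)" if "0 \<le> y" for y :: real
  proof -
    have "1 * y \<le> (exp e * exp e) * y"
      using that e by (intro mult_right_mono) (simp_all flip: exp_add)
    then show ?thesis by (simp add: mult.assoc)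
  qed
  have A0B0: "A0 x \<le> exp e * B0 x" "B0 x \<le> exp e * A0 x" for x
    using grow[of "pmf p x"] grow[of "pmf q x"] e
      mult_right_mono[of 1 "exp e" "pmf p x"] mult_right_mono[of 1 "exp e" "pmf q x"]
    by (auto simp: A0_def B0_def min_mult_distrib_left min_def)
  have A0p: "0 \<le> A0 x \<and> A0 x \<le> pmf p x" and B0q: "0 \<le> B0 x \<and> B0 x \<le> pmf q x" for x
    by (simp_all add: A0_def B0_def)
  have mass_A0: "1 - d \<le> sum A0 S" and mass_B0: "1 - d \<le> sum B0 S"
    unfolding A0_def B0_def using S pq qp by (simp_all add: sum_min_pmf_ge)
  show ?thesis
  proof (cases "sum A0 S \<le> sum B0 S")
    case True
    show ?thesis by (rule that[of A0 B0]) (use A0p B0q A0B0 True mass_A0 in auto)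
  next
    case False
    have "sum (\<lambda>x. exp (- e) * B0 x) S \<le> sum B0 S"
      using e B0q by (simp add: sum_distrib_left[symmetric] sum_nonneg mult_left_le_one_le)
    moreover have "exp (- e) * B0 x \<le> A0 x" for x
      using A0B0(2)[of x] by (simp add: exp_minus field_simps)
    ultimately obtain A where A: "\<And>x. exp (- e) * B0 x \<le> A x" "\<And>x. A x \<le> A0 x"
      and mass_A: "sum A S = sum B0 S"
      using False exists_between_sum_eq[of "\<lambda>x. exp (- e) * B0 x" A0 S "sum B0 S"] by force
    have "B0 x \<le> exp e * A x" for x
      using A(1)[of x] by (simp add: exp_minus field_simps)
    moreover have "0 \<le> A x" for x
      using A(1)[of x] B0q[of x] by (meson exp_ge_zero mult_nonneg_nonneg order_trans)
    moreover have "A x \<le> pmf p x" "A x \<le> exp e * B0 x" for x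
      using A(2)[of x] A0p[of x] A0B0(1)[of x] by linarith+
    ultimately show ?thesis
      using that[of A B0] B0q mass_A mass_B0 by simp
  qed
qed

text \<open>Sub-densities A \<le> p and B \<le> q witnessing that, outside p-mass d, the privacy loss of p
  against q has t-th exponential moment at most M. Such witnesses multiply under products.\<close>
definition moment_certificate :: "real \<Rightarrow> real \<Rightarrow> real \<Rightarrow> 'a pmf \<Rightarrow> 'a pmf \<Rightarrow> bool" where
  "moment_certificate t d M p q \<longleftrightarrow> finite (set_pmf p) \<and>
     (\<exists>A B. (\<forall>x. 0 \<le> A x \<and> A x \<le> pmf p x) \<and> (\<forall>x. 0 \<le> B x \<and> B x \<le> pmf q x) \<and>
        (\<forall>x. 0 < A x \<longrightarrow> 0 < B x) \<and> 1 - d \<le> sum A (set_pmf p) \<and>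
        (\<Sum>x\<in>set_pmf p. loss_moment t (A x) (B x)) \<le> M)"

lemma moment_certificateI:
  assumes "finite (set_pmf p)" "\<And>x. 0 \<le> A x \<and> A x \<le> pmf p x" "\<And>x. 0 \<le> B x \<and> B x \<le> pmf q x"
    "\<And>x. 0 < A x \<Longrightarrow> 0 < B x" "1 - d \<le> sum A (set_pmf p)"
    "(\<Sum>x\<in>set_pmf p. loss_moment t (A x) (B x)) \<le> M"
  shows "moment_certificate t d M p q"
  using assms unfolding moment_certificate_def by blast

lemma indist_of_moment_certificate:
  assumes cert: "moment_certificate t d M p q" and t: "0 \<le> t"
  shows "indist e (d + exp (- t * e) * M) p q"
proof -
  obtain A B where fin: "finite (set_pmf p)" and A: "\<And>x. 0 \<le> A x \<and> A x \<le> pmf p x"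
    and B: "\<And>x. 0 \<le> B x \<and> B x \<le> pmf q x" and AB: "\<And>x. 0 < A x \<Longrightarrow> 0 < B x"
    and mass: "1 - d \<le> sum A (set_pmf p)"
    and moment: "(\<Sum>x\<in>set_pmf p. loss_moment t (A x) (B x)) \<le> M"
    using cert unfolding moment_certificate_def by blast
  show ?thesis
    unfolding indist_def
  proof
    fix T
    define U where "U = set_pmf p \<inter> T"
    have U: "finite U" "U \<subseteq> set_pmf p" using fin by (auto simp: U_def)
    have "measure_pmf.prob p T = sum (pmf p) U"
      using U measure_Int_set_pmf[of p T] by (simp add: U_def Int_commute measure_measure_pmf_finite)
    also have "\<dots> = sum A U + sum (\<lambda>x. pmf p x - A x) U" by (simp add: sum_subtractf)
    also have "sum (\<lambda>x. pmf p x - A x) U \<le> sum (\<lambda>x. pmf p x - A x) (set_pmf p)"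
      using fin U A by (intro sum_mono2) auto
    also have "\<dots> \<le> d" using mass fin by (simp add: sum_subtractf sum_pmf_eq_1)
    also have "sum A U \<le> (\<Sum>x\<in>U. exp e * B x + exp (- t * e) * loss_moment t (A x) (B x))"
      using A B AB t by (intro sum_mono le_loss_moment) auto
    also have "\<dots> = exp e * sum B U + exp (- t * e) * (\<Sum>x\<in>U. loss_moment t (A x) (B x))"
      by (simp add: sum.distrib sum_distrib_left)
    also have "sum B U \<le> measure_pmf.prob q T"
    proof -
      have "sum B U \<le> sum (pmf q) U" using B by (intro sum_mono) auto
      also have "\<dots> = measure_pmf.prob q U" using U by (simp add: measure_measure_pmf_finite)
      also have "\<dots> \<le> measure_pmf.prob q T" by (intro measure_pmf.finite_measure_mono) (auto simp: U_def)
      finally show ?thesis .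
    qed
    also have "(\<Sum>x\<in>U. loss_moment t (A x) (B x)) \<le> M"
      using fin U moment by (meson loss_moment_nonneg sum_mono2 order_trans)
    finally show "measure_pmf.prob p T \<le> exp e * measure_pmf.prob q T + (d + exp (- t * e) * M)"
      by simp
  qed
qed

lemma moment_certificate_of_indist:
  assumes fin: "finite (set_pmf p)" "finite (set_pmf q)"
    and pq: "indist e d p q" and qp: "indist e d q p" and e: "0 \<le> e" and t: "0 \<le> t"
  shows "moment_certificate t d (exp (t * e * (exp e - 1) + t\<^sup>2 * e\<^sup>2 / 2)) p q"
proof -
  define S where "S = set_pmf p \<union> set_pmf q"
  have S: "finite S" "set_pmf p \<subseteq> S" "set_pmf q \<subseteq> S" using fin by (auto simp: S_def)
  obtain A B where A: "\<And>x. 0 \<le> A x \<and> A x \<le> pmf p x" and B: "\<And>x. 0 \<le> B x \<and> B x \<le> pmf q x"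
    and AB: "\<And>x. A x \<le> exp e * B x" and BA: "\<And>x. B x \<le> exp e * A x"
    and mass: "sum A S \<le> sum B S" and big: "1 - d \<le> sum A S"
    using indist_pure_core[OF S pq qp e] by blast
  have on_p: "sum g (set_pmf p) = sum g S" if "\<And>x. x \<notin> set_pmf p \<Longrightarrow> g x = 0" for g :: "_ \<Rightarrow> real"
    using S that by (intro sum.mono_neutral_left) auto
  have A_out: "A x = 0" if "x \<notin> set_pmf p" for x
    using A[of x] that by (simp add: set_pmf_iff)
  have "sum A S \<le> sum (pmf p) S" using A by (intro sum_mono) auto
  also have "\<dots> = 1" using S by (simp add: sum_pmf_eq_1)
  finally have "sum A S \<le> 1" .
  then have "(\<Sum>x\<in>S. loss_moment t (A x) (B x)) \<le> 1 * exp (t * e * (exp e - 1) + t\<^sup>2 * e\<^sup>2 / 2)"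
    using sum_loss_moment_le[OF S(1) _ AB BA mass t] A
    by (meson exp_ge_zero mult_right_mono order_trans)
  moreover have "0 < B x" if "0 < A x" for x
  proof -
    have "0 < exp e * B x" using that AB[of x] by linarith
    then show ?thesis by (simp add: zero_less_mult_iff)
  qed
  ultimately show ?thesis
    using fin A B big by (intro moment_certificateI[where A = A and B = B]) (simp_all add: on_p A_out)
qed

lemma moment_certificate_refl: "finite (set_pmf p) \<Longrightarrow> moment_certificate t 0 1 p p"
  by (rule moment_certificateI[where A = "pmf p" and B = "pmf p"])
    (simp_all add: loss_moment_same sum_pmf_eq_1)

lemma moment_certificate_pair:
  assumes "moment_certificate t d M p q" "moment_certificate t d' M' p' q'"
  shows "moment_certificate t (d + d') (M * M') (pair_pmf p p') (pair_pmf q q')"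
proof -
  obtain A B where fin: "finite (set_pmf p)" and A: "\<And>x. 0 \<le> A x \<and> A x \<le> pmf p x"
    and B: "\<And>x. 0 \<le> B x \<and> B x \<le> pmf q x" and AB: "\<And>x. 0 < A x \<Longrightarrow> 0 < B x"
    and mass: "1 - d \<le> sum A (set_pmf p)"
    and moment: "(\<Sum>x\<in>set_pmf p. loss_moment t (A x) (B x)) \<le> M"
    using assms(1) unfolding moment_certificate_def by blast
  obtain A' B' where fin': "finite (set_pmf p')" and A': "\<And>x. 0 \<le> A' x \<and> A' x \<le> pmf p' x"
    and B': "\<And>x. 0 \<le> B' x \<and> B' x \<le> pmf q' x" and AB': "\<And>x. 0 < A' x \<Longrightarrow> 0 < B' x"
    and mass': "1 - d' \<le> sum A' (set_pmf p')"
    and moment': "(\<Sum>x\<in>set_pmf p'. loss_moment t (A' x) (B' x)) \<le> M'"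
    using assms(2) unfolding moment_certificate_def by blast
  have sum_times: "(\<Sum>z\<in>set_pmf p \<times> set_pmf p'. f (fst z) * g (snd z)) =
      sum f (set_pmf p) * sum g (set_pmf p')" for f g :: "_ \<Rightarrow> real"
    by (simp add: sum_product sum.cartesian_product case_prod_beta)
  have le_1: "sum A (set_pmf p) \<le> 1" "sum A' (set_pmf p') \<le> 1"
    using fin fin' A A' sum_mono[of "set_pmf p" A "pmf p"] sum_mono[of "set_pmf p'" A' "pmf p'"]
    by (simp_all add: sum_pmf_eq_1)
  have "1 - (d + d') \<le> sum A (set_pmf p) * sum A' (set_pmf p')"
    using mass mass' le_1 mult_nonneg_nonneg[of "1 - sum A (set_pmf p)" "1 - sum A' (set_pmf p')"]
    by (simp add: algebra_simps)
  moreover have "(\<Sum>x\<in>set_pmf p. loss_moment t (A x) (B x)) *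
      (\<Sum>x\<in>set_pmf p'. loss_moment t (A' x) (B' x)) \<le> M * M'"
  proof (rule mult_mono[OF moment moment'])
    have "0 \<le> (\<Sum>x\<in>set_pmf p. loss_moment t (A x) (B x))" by (intro sum_nonneg loss_moment_nonneg)
    then show "0 \<le> M" using moment by linarith
  qed (intro sum_nonneg loss_moment_nonneg)
  ultimately show ?thesis
  proof (intro moment_certificateI[where A = "\<lambda>z. A (fst z) * A' (snd z)"
        and B = "\<lambda>z. B (fst z) * B' (snd z)"])
    show "finite (set_pmf (pair_pmf p p'))" using fin fin' by simp
    show "0 \<le> A (fst z) * A' (snd z) \<and> A (fst z) * A' (snd z) \<le> pmf (pair_pmf p p') z" for z
      using A[of "fst z"] A'[of "snd z"] by (cases z) (auto simp: pmf_pair intro: mult_mono)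
    show "0 \<le> B (fst z) * B' (snd z) \<and> B (fst z) * B' (snd z) \<le> pmf (pair_pmf q q') z" for z
      using B[of "fst z"] B'[of "snd z"] by (cases z) (auto simp: pmf_pair intro: mult_mono)
    show "0 < B (fst z) * B' (snd z)" if "0 < A (fst z) * A' (snd z)" for z
      using that A[of "fst z"] A'[of "snd z"] AB[of "fst z"] AB'[of "snd z"]
      by (auto simp: zero_less_mult_iff)
  qed (simp_all add: A A' B B' loss_moment_mult sum_times
      sum_times[of "\<lambda>x. loss_moment t (A x) (B x)" "\<lambda>y. loss_moment t (A' y) (B' y)"])
qed

lemma moment_certificate_map_pmf:
  assumes cert: "moment_certificate t d M p q" and f: "inj f"
  shows "moment_certificate t d M (map_pmf f p) (map_pmf f q)"
proof -
  obtain A B where fin: "finite (set_pmf p)" and A: "\<And>x. 0 \<le> A x \<and> A x \<le> pmf p x"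
    and B: "\<And>x. 0 \<le> B x \<and> B x \<le> pmf q x" and AB: "\<And>x. 0 < A x \<Longrightarrow> 0 < B x"
    and mass: "1 - d \<le> sum A (set_pmf p)"
    and moment: "(\<Sum>x\<in>set_pmf p. loss_moment t (A x) (B x)) \<le> M"
    using cert unfolding moment_certificate_def by blast
  define lift :: "('a \<Rightarrow> real) \<Rightarrow> 'b \<Rightarrow> real" where
    "lift g y = (if y \<in> range f then g (inv f y) else 0)" for g y
  have lift_f [simp]: "lift g (f x) = g x" for g x
    using f by (simp add: lift_def)
  have pmf_map: "pmf (map_pmf f r) y = lift (pmf r) y" for r y
    using f by (auto simp: lift_def pmf_map_inj' pmf_eq_0_set_pmf)
  have sum_map: "sum g (f ` set_pmf p) = (\<Sum>x\<in>set_pmf p. g (f x))" for g :: "_ \<Rightarrow> real"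
    using f by (simp add: sum.reindex inj_on_subset[of f UNIV])
  show ?thesis
    using fin A B AB mass moment
    by (intro moment_certificateI[where A = "lift A" and B = "lift B"])
      (auto simp: pmf_map sum_map lift_def f split: if_splits)
qed

lemma moment_certificate_list_pmf:
  assumes "list_all2 (moment_certificate t d M) Ps Qs"
  shows "moment_certificate t (real (length Ps) * d) (M ^ length Ps) (list_pmf Ps) (list_pmf Qs)"
  using assms
proof (induction rule: list_all2_induct)
  case Nil
  show ?case using moment_certificate_refl[of "return_pmf []" t] by simp
next
  case (Cons p Ps q Qs)
  have "inj (\<lambda>(x :: 'a, xs). x # xs)" by (auto simp: inj_def)
  then have "moment_certificate t (d + real (length Ps) * d) (M * M ^ length Ps)
      (list_pmf (p # Ps)) (list_pmf (q # Qs))"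
    unfolding list_pmf_Cons_pair
    by (intro moment_certificate_map_pmf moment_certificate_pair Cons.hyps(1) Cons.IH)
  then show ?case by (simp add: algebra_simps)
qed

theorem indist_list_pmf_composition:
  assumes "list_all2 (\<lambda>p q. finite (set_pmf p) \<and> finite (set_pmf q) \<and>
      indist e0 d0 p q \<and> indist e0 d0 q p) Ps Qs"
    and "0 \<le> e0" "0 \<le> t"
  shows "indist e (real (length Ps) * d0 +
      exp (- t * e) * exp (t * e0 * (exp e0 - 1) + t\<^sup>2 * e0\<^sup>2 / 2) ^ length Ps)
    (list_pmf Ps) (list_pmf Qs)"
proof (rule indist_of_moment_certificate[OF moment_certificate_list_pmf \<open>0 \<le> t\<close>])
  show "list_all2 (moment_certificate t d0 (exp (t * e0 * (exp e0 - 1) + t\<^sup>2 * e0\<^sup>2 / 2))) Ps Qs"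
    using assms(1) by (rule list_all2_mono) (use assms(2,3) moment_certificate_of_indist in blast)
qed

section \<open>The real-sum protocol as r bit-sum protocols\<close>

definition shuffled_bits :: "nat \<Rightarrow> real \<Rightarrow> bool list list \<Rightarrow> bool multiset pmf" where
  "shuffled_bits n lam bss =
     map_pmf (\<lambda>ys. mset (concat ys)) (list_pmf (map (\<lambda>bs. list_pmf (map (bit_rand n lam) bs)) bss))"

lemma realsum_shuffled_eq_bind:
  "realsum_shuffled n lam r X = bind_pmf (list_pmf (map (encoder r) X)) (shuffled_bits n lam)"
proof -
  have "list_pmf (map (realsum_user n lam r) X) =
      bind_pmf (list_pmf (map (encoder r) X))
        (\<lambda>bss. list_pmf (map2 (\<lambda>x bs. list_pmf (map (bit_rand n lam) bs)) X bss))"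
    unfolding realsum_user_def by (rule list_pmf_map_bind)
  also have "\<dots> = bind_pmf (list_pmf (map (encoder r) X))
      (\<lambda>bss. list_pmf (map (\<lambda>bs. list_pmf (map (bit_rand n lam) bs)) bss))"
    by (intro bind_pmf_cong refl arg_cong[where f = list_pmf] nth_equalityI)
       (auto dest: length_of_set_list_pmf)
  finally show ?thesis
    unfolding realsum_shuffled_def shuffled_bits_def by (simp add: map_bind_pmf)
qed

lemma length_of_set_encoder: "bs \<in> set_pmf (encoder r x) \<Longrightarrow> length bs = r"
  unfolding encoder_def Let_def by (auto dest: length_of_set_list_pmf)

lemma bitsum_shuffled_Cons:
  "bitsum_shuffled n lam (b # bs) =
     map_pmf (\<lambda>(y, M). add_mset y M) (pair_pmf (bit_rand n lam b) (bitsum_shuffled n lam bs))"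
  unfolding bitsum_shuffled_def list.map list_pmf_Cons_pair
  by (simp add: pair_map_pmf2 pmf.map_comp comp_def case_prod_beta)

lemma shuffled_bits_Cons:
  "shuffled_bits n lam (bs # bss) =
     map_pmf (\<lambda>(ys, M). mset ys + M)
       (pair_pmf (list_pmf (map (bit_rand n lam) bs)) (shuffled_bits n lam bss))"
  unfolding shuffled_bits_def list.map list_pmf_Cons_pair
  by (simp add: pair_map_pmf2 pmf.map_comp comp_def case_prod_beta)

lemma sum_list_map2_add_mset:
  "length ys = length Ms \<Longrightarrow> sum_list (map2 add_mset ys Ms) = mset ys + sum_list Ms"
  by (induction ys Ms rule: list_induct2) auto

lemma shuffled_bits_eq_columns:
  assumes "\<And>bs. bs \<in> set bss \<Longrightarrow> length bs = r"
  shows "shuffled_bits n lam bss =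
    map_pmf sum_list (list_pmf (map (\<lambda>j. bitsum_shuffled n lam (map (\<lambda>bs. bs ! j) bss)) [0..<r]))"
  using assms
proof (induction bss)
  case Nil
  have "list_pmf (map (\<lambda>j. bitsum_shuffled n lam []) [0..<r]) = return_pmf (replicate r {#})"
    using list_pmf_map_return[of "replicate r {#}"] by (simp add: bitsum_shuffled_def map_replicate_const)
  moreover have "sum_list (replicate r ({#} :: bool multiset)) = {#}" by (induction r) simp_all
  ultimately show ?case by (simp add: shuffled_bits_def)
next
  case (Cons bs bss)
  define row where "row = list_pmf (map (bit_rand n lam) bs)"
  define cols where "cols = list_pmf (map (\<lambda>j. bitsum_shuffled n lam (map (\<lambda>bs. bs ! j) bss)) [0..<r])"
  have len: "length bs = r" using Cons.prems by simp
  have "map (\<lambda>j. bitsum_shuffled n lam (map (\<lambda>bs. bs ! j) (bs # bss))) [0..<r] =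
      map (map_pmf (\<lambda>(y, M). add_mset y M))
        (map2 pair_pmf (map (bit_rand n lam) bs) (map (\<lambda>j. bitsum_shuffled n lam (map (\<lambda>bs. bs ! j) bss)) [0..<r]))"
    using len by (intro nth_equalityI) (simp_all add: bitsum_shuffled_Cons)
  then have "list_pmf (map (\<lambda>j. bitsum_shuffled n lam (map (\<lambda>bs. bs ! j) (bs # bss))) [0..<r]) =
      map_pmf (map (\<lambda>(y, M). add_mset y M)) (list_pmf (map2 pair_pmf (map (bit_rand n lam) bs)
        (map (\<lambda>j. bitsum_shuffled n lam (map (\<lambda>bs. bs ! j) bss)) [0..<r])))"
    by (simp only: list_pmf_map_pmf)
  also have "\<dots> = map_pmf (map (\<lambda>(y, M). add_mset y M)) (map_pmf (\<lambda>(xs, ys). zip xs ys) (pair_pmf row cols))"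
    using len by (simp add: list_pmf_map2_pair row_def cols_def)
  also have "\<dots> = map_pmf (\<lambda>(ys, Ms). map2 add_mset ys Ms) (pair_pmf row cols)"
    by (simp add: pmf.map_comp comp_def split_def)
  finally have "list_pmf (map (\<lambda>j. bitsum_shuffled n lam (map (\<lambda>bs. bs ! j) (bs # bss))) [0..<r]) =
      map_pmf (\<lambda>(ys, Ms). map2 add_mset ys Ms) (pair_pmf row cols)" .
  moreover have "length ys = r \<and> length Ms = r" if "(ys, Ms) \<in> set_pmf (pair_pmf row cols)" for ys Ms
    using that len by (auto simp: row_def cols_def dest!: length_of_set_list_pmf)
  ultimately have "map_pmf sum_list (list_pmf (map (\<lambda>j. bitsum_shuffled n lam (map (\<lambda>bs. bs ! j) (bs # bss))) [0..<r])) =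
      map_pmf (\<lambda>(ys, Ms). mset ys + sum_list Ms) (pair_pmf row cols)"
    by (auto simp: pmf.map_comp sum_list_map2_add_mset intro!: map_pmf_cong)
  also have "\<dots> = shuffled_bits n lam (bs # bss)"
    using Cons by (simp add: shuffled_bits_Cons row_def cols_def pair_map_pmf2 pmf.map_comp comp_def
        split_def)
  finally show ?case ..
qed

lemma finite_set_bitsum_shuffled: "finite (set_pmf (bitsum_shuffled n lam bs))"
proof -
  have "set_pmf (list_pmf (map (bit_rand n lam) bs)) \<subseteq> {xs. set xs \<subseteq> UNIV \<and> length xs = length bs}"
    by (auto dest: length_of_set_list_pmf)
  then show ?thesis
    unfolding bitsum_shuffled_def using finite_lists_length_eq[of "UNIV :: bool set"]
    by (auto intro: finite_subset)
qed

lemma indist_shuffled_bits: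
  assumes dp: "dp e0 d0 n UNIV (bitsum_shuffled n lam)" and e0: "0 \<le> e0" and t: "0 \<le> t"
    and adj: "adjacent n bss bss'"
    and rows: "\<And>bs. bs \<in> set bss \<Longrightarrow> length bs = r" "\<And>bs. bs \<in> set bss' \<Longrightarrow> length bs = r"
  shows "indist e (real r * d0 + exp (- t * e) * exp (t * e0 * (exp e0 - 1) + t\<^sup>2 * e0\<^sup>2 / 2) ^ r)
    (shuffled_bits n lam bss) (shuffled_bits n lam bss')"
proof -
  define col where "col bss = (\<lambda>j. bitsum_shuffled n lam (map (\<lambda>bs. bs ! j) bss))" for bss
  have "indist e0 d0 (col bss j) (col bss' j) \<and> indist e0 d0 (col bss' j) (col bss j)" for j
    using dp adjacent_map[OF adj, of "\<lambda>bs. bs ! j"] adjacent_map[OF adjacent_sym[OF adj], of "\<lambda>bs. bs ! j"]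
    by (simp add: dp_iff_indist col_def)
  then have "list_all2 (\<lambda>p q. finite (set_pmf p) \<and> finite (set_pmf q) \<and>
      indist e0 d0 p q \<and> indist e0 d0 q p) (map (col bss) [0..<r]) (map (col bss') [0..<r])"
    by (simp add: list_all2_conv_all_nth col_def finite_set_bitsum_shuffled)
  from indist_list_pmf_composition[OF this e0 t]
  have "indist e (real r * d0 + exp (- t * e) * exp (t * e0 * (exp e0 - 1) + t\<^sup>2 * e0\<^sup>2 / 2) ^ r)
      (map_pmf sum_list (list_pmf (map (col bss) [0..<r])))
      (map_pmf sum_list (list_pmf (map (col bss') [0..<r])))"
    by (intro indist_map_pmf) simp
  then show ?thesis
    using rows by (simp add: shuffled_bits_eq_columns col_def)
qed

text \<open>Users with equal inputs are coupled to produce equal encodings, so the two lists of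
  encodings are again adjacent.\<close>
lemma realsum_dp_of_bitsum_dp:
  assumes dp: "dp e0 d0 n UNIV (bitsum_shuffled n lam)" and e0: "0 \<le> e0" and t: "0 \<le> t"
  shows "dp e (real r * d0 + exp (- t * e) * exp (t * e0 * (exp e0 - 1) + t\<^sup>2 * e0\<^sup>2 / 2) ^ r)
    n D (realsum_shuffled n lam r)"
  unfolding dp_iff_indist
proof (intro allI impI)
  fix X X' :: "real list"
  assume adj: "adjacent n X X'"
  then have len: "length X = n" "length X' = n" by (simp_all add: adjacent_def)
  define Z where "Z x x' = (if x = x' then map_pmf (\<lambda>bs. (bs, bs)) (encoder r x)
    else pair_pmf (encoder r x) (encoder r x'))" for x x'
  define \<pi> where "\<pi> = map_pmf (\<lambda>zs. (map fst zs, map snd zs)) (list_pmf (map2 Z X X'))"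
  have marginals: "map_pmf fst \<pi> = list_pmf (map (encoder r) X)" "map_pmf snd \<pi> = list_pmf (map (encoder r) X')"
    using len by (auto simp: \<pi>_def pmf.map_comp comp_def list_pmf_map_pmf[symmetric] Z_def
        map_fst_pair_pmf map_snd_pair_pmf intro!: arg_cong[where f = list_pmf] nth_equalityI)
  have "indist e (real r * d0 + exp (- t * e) * exp (t * e0 * (exp e0 - 1) + t\<^sup>2 * e0\<^sup>2 / 2) ^ r)
      (bind_pmf (map_pmf fst \<pi>) (shuffled_bits n lam)) (bind_pmf (map_pmf snd \<pi>) (shuffled_bits n lam))"
  proof (rule indist_bind_coupling)
    fix z assume "z \<in> set_pmf \<pi>"
    have "z \<in> (\<lambda>zs. (map fst zs, map snd zs)) ` set_pmf (list_pmf (map2 Z X X'))"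
      using \<open>z \<in> set_pmf \<pi>\<close> by (simp add: \<pi>_def)
    then obtain zs where zs: "zs \<in> set_pmf (list_pmf (map2 Z X X'))" and z: "z = (map fst zs, map snd zs)"
      by blast
    have lzs: "length zs = n" using length_of_set_list_pmf[OF zs] len by simp
    have props: "length (map fst zs ! i) = r \<and> length (map snd zs ! i) = r \<and>
        (X ! i = X' ! i \<longrightarrow> map fst zs ! i = map snd zs ! i)" if "i < n" for i
    proof -
      have "zs ! i \<in> set_pmf (Z (X ! i) (X' ! i))"
        using nth_of_set_list_pmf[OF zs] that len by simp
      then show ?thesis
        using that lzs by (cases "X ! i = X' ! i") (auto simp: Z_def length_of_set_encoder)
    qed
    show "indist e (real r * d0 + exp (- t * e) * exp (t * e0 * (exp e0 - 1) + t\<^sup>2 * e0\<^sup>2 / 2) ^ r)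
        (shuffled_bits n lam (fst z)) (shuffled_bits n lam (snd z))"
      unfolding z fst_conv snd_conv
    proof (rule indist_shuffled_bits[OF dp e0 t])
      show "adjacent n (map fst zs) (map snd zs)"
        using props lzs by (intro adjacent_of_agree[OF adj]) auto
      show "length bs = r" if "bs \<in> set (map fst zs)" for bs
        using all_nth_imp_all_set[OF _ that, where P = "\<lambda>bs. length bs = r"] props lzs by simp
      show "length bs = r" if "bs \<in> set (map snd zs)" for bs
        using all_nth_imp_all_set[OF _ that, where P = "\<lambda>bs. length bs = r"] props lzs by simp
    qed
  qed
  then show "indist e (real r * d0 + exp (- t * e) * exp (t * e0 * (exp e0 - 1) + t\<^sup>2 * e0\<^sup>2 / 2) ^ r)
      (realsum_shuffled n lam r X) (realsum_shuffled n lam r X')"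
    by (simp add: realsum_shuffled_eq_bind marginals)
qed

section \<open>Privacy of the bit-sum protocol as a function of \<lambda>\<close>

definition resample_pmf :: "real \<Rightarrow> bool option pmf" where
  "resample_pmf \<rho> = bind_pmf (bernoulli_pmf \<rho>)
     (\<lambda>c. if c then map_pmf Some (bernoulli_pmf (1/2)) else return_pmf None)"

lemma pmf_bind_bernoulli:
  "0 \<le> p \<Longrightarrow> p \<le> 1 \<Longrightarrow>
   pmf (bind_pmf (bernoulli_pmf p) f) x = p * pmf (f True) x + (1 - p) * pmf (f False) x"
  by (simp add: pmf_bind)

lemma pmf_resample_pmf_None: "0 \<le> \<rho> \<Longrightarrow> \<rho> \<le> 1 \<Longrightarrow> pmf (resample_pmf \<rho>) None = 1 - \<rho>"
  unfolding resample_pmf_def by (simp add: pmf_bind_bernoulli pmf_eq_0_set_pmf)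

lemma pmf_bit_rand:
  assumes "0 \<le> l" "l \<le> real n" "0 < n"
  shows "pmf (bit_rand n l b) x = l / n / 2 + (1 - l / n) * (if x = b then 1 else 0)"
proof -
  have "pmf (bernoulli_pmf (1/2)) y = 1/2" for y by (cases y) simp_all
  then show ?thesis using assms by (simp add: bit_rand_def pmf_bind_bernoulli)
qed

lemma bit_rand_resample:
  assumes s: "0 \<le> s" "s \<le> real n" and n: "0 < n" and \<rho>: "0 \<le> \<rho>" "\<rho> \<le> 1"
  shows "bit_rand n (s + \<rho> * (real n - s)) b =
    bind_pmf (resample_pmf \<rho>) (\<lambda>w. bit_rand n s (case_option b id w))"
proof (rule pmf_eqI)
  fix x
  have l: "0 \<le> s + \<rho> * (real n - s)" "s + \<rho> * (real n - s) \<le> real n"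
    using s \<rho> mult_right_mono[of \<rho> 1 "real n - s"] by auto
  have "pmf (bind_pmf (resample_pmf \<rho>) (\<lambda>w. bit_rand n s (case_option b id w))) x =
      \<rho> * (1/2 * pmf (bit_rand n s True) x + 1/2 * pmf (bit_rand n s False) x) +
      (1 - \<rho>) * pmf (bit_rand n s b) x"
    unfolding resample_pmf_def using \<rho>
    by (simp add: bind_assoc_pmf bind_return_pmf bind_map_pmf pmf_bind_bernoulli)
  also have "\<dots> = pmf (bit_rand n (s + \<rho> * (real n - s)) b) x"
    using s n l by (cases x; cases b) (simp_all add: pmf_bit_rand field_simps)
  finally show "pmf (bit_rand n (s + \<rho> * (real n - s)) b) x =
      pmf (bind_pmf (resample_pmf \<rho>) (\<lambda>w. bit_rand n s (case_option b id w))) x" ..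
qed

lemma bitsum_shuffled_resample:
  assumes "0 \<le> s" "s \<le> real n" "0 < n" "0 \<le> \<rho>" "\<rho> \<le> 1"
  shows "bitsum_shuffled n (s + \<rho> * (real n - s)) X =
    bind_pmf (list_pmf (replicate (length X) (resample_pmf \<rho>)))
      (\<lambda>ws. bitsum_shuffled n s (map2 (\<lambda>b. case_option b id) X ws))"
proof -
  have "bit_rand n (s + \<rho> * (real n - s)) =
      (\<lambda>b. bind_pmf (resample_pmf \<rho>) (\<lambda>w. bit_rand n s (case_option b id w)))"
    using bit_rand_resample[OF assms] by (rule ext)
  then have "list_pmf (map (bit_rand n (s + \<rho> * (real n - s))) X) =
      list_pmf (map (\<lambda>b. bind_pmf (resample_pmf \<rho>) (\<lambda>w. bit_rand n s (case_option b id w))) X)"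
    by simp
  also have "\<dots> = bind_pmf (list_pmf (map (\<lambda>_. resample_pmf \<rho>) X))
      (\<lambda>ws. list_pmf (map2 (\<lambda>b w. bit_rand n s (case_option b id w)) X ws))"
    by (rule list_pmf_map_bind)
  finally show ?thesis
    unfolding bitsum_shuffled_def
    by (simp add: map_bind_pmf map_replicate_const split_def comp_def)
qed

lemma adjacent_map2_overwrite:
  "adjacent n X X' \<Longrightarrow> length ws = n \<Longrightarrow>
   adjacent n (map2 (\<lambda>b. case_option b id) X ws) (map2 (\<lambda>b. case_option b id) X' ws)"
  by (rule adjacent_of_agree) (auto simp: adjacent_def split: option.split)

text \<open>A larger \<lambda> is a post-processing of a smaller one applied to randomly overwritten
  inputs, and overwriting the same positions keeps inputs adjacent.\<close>
lemma dp_bitsum_mono: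
  assumes dp: "dp e d n UNIV (bitsum_shuffled n s)" and sl: "0 \<le> s" "s \<le> l" "l \<le> real n"
  shows "dp e d n UNIV (bitsum_shuffled n l)"
proof (cases "s = real n")
  case True
  then show ?thesis using dp sl by simp
next
  case False
  then have sn: "s < real n" and n: "0 < n" using sl by auto
  define \<rho> where "\<rho> = (l - s) / (real n - s)"
  have \<rho>: "0 \<le> \<rho>" "\<rho> \<le> 1" using sl sn by (auto simp: \<rho>_def divide_le_eq_1)
  have l: "l = s + \<rho> * (real n - s)" using sn by (simp add: \<rho>_def)
  show ?thesis
    unfolding dp_iff_indist
  proof (intro allI impI)
    fix X X' :: "bool list"
    assume adj: "adjacent n X X'"
    then have len: "length X = n" "length X' = n" by (simp_all add: adjacent_def)
    define \<pi> where "\<pi> = map_pmf (\<lambda>ws. (ws, ws)) (list_pmf (replicate n (resample_pmf \<rho>)))"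
    have "indist e d (bind_pmf (map_pmf fst \<pi>) (\<lambda>ws. bitsum_shuffled n s (map2 (\<lambda>b. case_option b id) X ws)))
        (bind_pmf (map_pmf snd \<pi>) (\<lambda>ws. bitsum_shuffled n s (map2 (\<lambda>b. case_option b id) X' ws)))"
    proof (rule indist_bind_coupling)
      fix z assume "z \<in> set_pmf \<pi>"
      then obtain ws where "ws \<in> set_pmf (list_pmf (replicate n (resample_pmf \<rho>)))" "z = (ws, ws)"
        by (auto simp: \<pi>_def)
      then show "indist e d (bitsum_shuffled n s (map2 (\<lambda>b. case_option b id) X (fst z)))
          (bitsum_shuffled n s (map2 (\<lambda>b. case_option b id) X' (snd z)))"
        using dp adjacent_map2_overwrite[OF adj] by (auto simp: dp_iff_indist dest: length_of_set_list_pmf)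
    qed
    then show "indist e d (bitsum_shuffled n l X) (bitsum_shuffled n l X')"
      unfolding l bitsum_shuffled_resample[OF sl(1) less_imp_le[OF sn] n \<rho>] len \<pi>_def
      by (simp add: pmf.map_comp comp_def)
  qed
qed

lemma measure_bind_pmf_ge:
  "pmf p x * measure_pmf.prob (F x) T \<le> measure_pmf.prob (bind_pmf p F) T"
proof -
  have "pmf p x * measure_pmf.prob (F x) T =
      measure_pmf.expectation p (\<lambda>y. indicator {x} y * measure_pmf.prob (F x) T)"
    by (simp add: measure_pmf_single)
  also have "\<dots> \<le> measure_pmf.expectation p (\<lambda>y. measure_pmf.prob (F y) T)"
    by (intro integral_mono measure_pmf.integrable_const_bound[where B = 1]) (auto simp: indicator_def)
  also have "\<dots> = measure_pmf.prob (bind_pmf p F) T" by (simp add: measure_bind_pmf)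
  finally show ?thesis .
qed

lemma measure_bind_pmf_le:
  "measure_pmf.prob (bind_pmf p F) T \<le> pmf p x * measure_pmf.prob (F x) T + (1 - pmf p x)"
proof -
  have "pmf p x * (1 - measure_pmf.prob (F x) T) \<le> 1 - measure_pmf.prob (bind_pmf p F) T"
    using measure_bind_pmf_ge[of p x F "UNIV - T"]
    by (simp add: measure_pmf.prob_compl[of T "F x", simplified]
        measure_pmf.prob_compl[of T "bind_pmf p F", simplified])
  then show ?thesis by (simp add: algebra_simps)
qed

text \<open>Raising \<lambda> from s to s + \<rho> (n - s) leaves all inputs untouched with probability
  (1 - \<rho>)^n, which tends to 1 as \<rho> tends to 0.\<close>
lemma dp_bitsum_closed:
  assumes s: "0 \<le> s" "s < real n"
    and above: "\<And>l. s < l \<Longrightarrow> l \<le> real n \<Longrightarrow> dp e d n UNIV (bitsum_shuffled n l)"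
  shows "dp e d n UNIV (bitsum_shuffled n s)"
  unfolding dp_iff_indist indist_def
proof (intro allI impI)
  fix X X' :: "bool list" and T
  assume adj: "adjacent n X X'"
  then have len: "length X = n" "length X' = n" by (simp_all add: adjacent_def)
  have n: "0 < n" using s by simp
  define p where "p = measure_pmf.prob (bitsum_shuffled n s X) T"
  define p' where "p' = measure_pmf.prob (bitsum_shuffled n s X') T"
  have bound: "(1 - \<rho>) ^ n * p \<le> exp e * ((1 - \<rho>) ^ n * p' + (1 - (1 - \<rho>) ^ n)) + d"
    if \<rho>: "0 < \<rho>" "\<rho> < 1" for \<rho>
  proof -
    define l where "l = s + \<rho> * (real n - s)"
    define W where "W = list_pmf (replicate n (resample_pmf \<rho>))"
    have "\<rho> * (real n - s) \<le> real n - s" using s \<rho> by (intro mult_left_le_one_le) auto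
    moreover have "0 < \<rho> * (real n - s)" using s \<rho> by simp
    ultimately have l_bounds: "s < l" "l \<le> real n" unfolding l_def by linarith+
    have W_None: "pmf W (replicate n None) = (1 - \<rho>) ^ n"
      using \<rho> by (simp add: W_def pmf_list_pmf_replicate pmf_resample_pmf_None)
    have rep: "bitsum_shuffled n l Y = bind_pmf W (\<lambda>ws. bitsum_shuffled n s (map2 (\<lambda>b. case_option b id) Y ws))"
      if "length Y = n" for Y
      using bitsum_shuffled_resample[OF s(1) less_imp_le[OF s(2)] n, of \<rho> Y] \<rho> that
      by (simp add: l_def W_def)
    have keep: "map2 (\<lambda>b. case_option b id) Y (replicate n None) = Y" if "length Y = n" for Y
      using that by (intro nth_equalityI) auto
    have "(1 - \<rho>) ^ n * p \<le> measure_pmf.prob (bitsum_shuffled n l X) T"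
      using measure_bind_pmf_ge[of W "replicate n None"
          "\<lambda>ws. bitsum_shuffled n s (map2 (\<lambda>b. case_option b id) X ws)" T]
      by (simp add: rep len keep W_None p_def)
    also have "\<dots> \<le> exp e * measure_pmf.prob (bitsum_shuffled n l X') T + d"
      using above[OF l_bounds] adj by (simp add: dp_iff_indist indist_def)
    also have "measure_pmf.prob (bitsum_shuffled n l X') T \<le> (1 - \<rho>) ^ n * p' + (1 - (1 - \<rho>) ^ n)"
      using measure_bind_pmf_le[of W "\<lambda>ws. bitsum_shuffled n s (map2 (\<lambda>b. case_option b id) X' ws)"
          T "replicate n None"]
      by (simp add: rep len keep W_None p'_def)
    finally show ?thesis by (simp add: mult_left_mono)
  qed
  have "((\<lambda>\<rho>. (1 - \<rho>) ^ n * p) \<longlongrightarrow> (1 - 0) ^ n * p) (at_right 0)"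
    by (intro tendsto_intros)
  moreover have "((\<lambda>\<rho>. exp e * ((1 - \<rho>) ^ n * p' + (1 - (1 - \<rho>) ^ n)) + d) \<longlongrightarrow>
      exp e * ((1 - 0) ^ n * p' + (1 - (1 - 0) ^ n)) + d) (at_right 0)"
    by (intro tendsto_intros)
  moreover have "eventually (\<lambda>\<rho>. (1 - \<rho>) ^ n * p \<le>
      exp e * ((1 - \<rho>) ^ n * p' + (1 - (1 - \<rho>) ^ n)) + d) (at_right 0)"
    using eventually_at_right_real[OF zero_less_one] by eventually_elim (auto intro: bound)
  ultimately show "p \<le> exp e * p' + d"
    using tendsto_le[OF trivial_limit_at_right_real] by fastforce
qed

text \<open>bernoulli_pmf clips its parameter to [0, 1], so every \<lambda> \<ge> n behaves like \<lambda> = n.\<close>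
lemma bit_rand_min: "bit_rand n l = bit_rand n (min l (real n))"
proof (cases "l \<le> real n \<or> n = 0")
  case False
  then have "1 \<le> l / real n" by simp
  then have "min 1 (max 0 (l / real n)) = min 1 (max 0 (min l (real n) / real n))"
    using False by simp
  then have "bernoulli_pmf (l / real n) = bernoulli_pmf (min l (real n) / real n)"
    by (intro pmf_eqI) (simp add: bernoulli_pmf.rep_eq)
  then show ?thesis by (simp add: bit_rand_def fun_eq_iff)
qed (auto simp: bit_rand_def)

lemma bitsum_shuffled_full:
  assumes "0 < n"
  shows "bitsum_shuffled n (real n) X = map_pmf mset (list_pmf (replicate (length X) (bernoulli_pmf (1/2))))"
proof -
  have "bit_rand n (real n) b = bernoulli_pmf (1/2)" for b
    using assms by (intro pmf_eqI) (simp add: bit_rand_def pmf_bind_bernoulli)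
  then have "bit_rand n (real n) = (\<lambda>_. bernoulli_pmf (1/2))" by (rule ext)
  then show ?thesis by (simp add: bitsum_shuffled_def map_replicate_const)
qed

lemma dp_bitsum_of_lambda_star_le:
  assumes e: "0 \<le> e" and d: "0 \<le> d" and lam: "lambda_star n e d \<le> lam"
  shows "dp e d n UNIV (bitsum_shuffled n lam)"
proof (cases "n = 0")
  case True
  then show ?thesis by (intro dp_const e d) simp
next
  case False
  then have n: "0 < n" by simp
  define S where "S = {l. 0 \<le> l \<and> l \<le> real n \<and> dp e d n UNIV (bitsum_shuffled n l)}"
  have dp_n: "dp e d n UNIV (bitsum_shuffled n (real n))"
    by (intro dp_const e d) (simp add: bitsum_shuffled_full[OF n])
  then have n_S: "real n \<in> S" by (simp add: S_def)
  moreover have bdd: "bdd_below S" by (rule bdd_belowI[of _ 0]) (auto simp: S_def)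
  ultimately have Inf_S: "0 \<le> Inf S" "Inf S \<le> real n" "Inf S \<le> lam"
    using lam by (auto simp: lambda_star_def S_def intro: cInf_greatest cInf_lower)
  have above: "dp e d n UNIV (bitsum_shuffled n l)" if l: "Inf S < l" "l \<le> real n" for l
  proof -
    have "S \<noteq> {}" using n_S by blast
    then obtain s where "s \<in> S" "s < l" using l(1) cInf_less_iff[OF _ bdd] by auto
    then show ?thesis by (intro dp_bitsum_mono[of e d n s l]) (use l in \<open>auto simp: S_def\<close>)
  qed
  define lam' where "lam' = min lam (real n)"
  have "dp e d n UNIV (bitsum_shuffled n lam')"
  proof (cases "lam' = real n")
    case False
    show ?thesis
      by (rule dp_bitsum_closed) (use False Inf_S above in \<open>auto simp: lam'_def\<close>)
  qed (use dp_n in simp)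
  moreover have "bitsum_shuffled n lam = bitsum_shuffled n lam'"
    unfolding bitsum_shuffled_def lam'_def using bit_rand_min[of n lam] by simp
  ultimately show ?thesis by simp
qed

text \<open>With the Chernoff parameter t = 4 L / \<epsilon>, L = ln (2 / \<delta>), the exponent is at most
  \<epsilon> + L - 4 L \<le> - L, so the Chernoff term is at most \<delta> / 2.\<close>
lemma composition_parameters_le:
  fixes eps del :: real and r :: nat
  assumes eps: "0 < eps" "eps < 1" and del: "0 < del" "del < 1"
  defines "L \<equiv> ln (2 / del)"
  defines "e0 \<equiv> eps / sqrt (8 * real r * L)" and "t \<equiv> 4 * L / eps"
  shows "real r * (del / (2 * real r)) +
    exp (- t * eps) * exp (t * e0 * (exp e0 - 1) + t\<^sup>2 * e0\<^sup>2 / 2) ^ r \<le> del"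
proof -
  have "ln 2 \<le> L" using del by (simp add: L_def field_simps)
  then have L: "2 / 3 \<le> L" using ln2_ge_two_thirds by linarith
  have exponent: "real r * (t * e0 * (exp e0 - 1) + t\<^sup>2 * e0\<^sup>2 / 2) \<le> eps + L"
  proof (cases "r = 0")
    case False
    then have r: "1 \<le> real r" by simp
    have e0_sq: "real r * e0\<^sup>2 = eps\<^sup>2 / (8 * L)"
      using r L by (simp add: e0_def power_divide field_simps)
    have "8 * 1 * (2 / 3) \<le> 8 * real r * L" using r L by (intro mult_mono) auto
    then have "1 \<le> 8 * real r * L" by linarith
    then have "1 \<le> sqrt (8 * real r * L)" by simp
    moreover have pos: "0 < 8 * real r * L" using r L by simp
    ultimately have "e0 \<le> eps"
      using eps divide_left_mono[of 1 "sqrt (8 * real r * L)" eps] by (simp add: e0_def)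
    then have e0: "0 \<le> e0" "e0 \<le> 1" using eps pos by (simp add: e0_def, linarith)
    then have "exp e0 \<le> 1 + e0 + e0\<^sup>2" by (rule exp_bound)
    moreover have "e0\<^sup>2 \<le> e0" using e0 by (simp add: power2_eq_square mult_left_le_one_le)
    ultimately have "exp e0 - 1 \<le> 2 * e0" by linarith
    then have "real r * (t * e0 * (exp e0 - 1)) \<le> real r * (t * e0 * (2 * e0))"
      using eps L by (intro mult_left_mono) (auto simp: t_def e0_def)
    also have "\<dots> = 2 * t * (real r * e0\<^sup>2)" by (simp add: power2_eq_square algebra_simps)
    also have "\<dots> = eps" unfolding e0_sq using eps L by (simp add: t_def power2_eq_square field_simps)
    finally have "real r * (t * e0 * (exp e0 - 1)) \<le> eps" .
    moreover have "real r * (t\<^sup>2 * e0\<^sup>2 / 2) = t\<^sup>2 / 2 * (real r * e0\<^sup>2)"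
      by (simp add: algebra_simps)
    moreover have "t\<^sup>2 / 2 * (real r * e0\<^sup>2) = L"
      unfolding e0_sq using eps L by (simp add: t_def power2_eq_square field_simps)
    ultimately show ?thesis by (simp only: distrib_left)
  qed (use eps L in simp)
  have "exp (- t * eps) * exp (t * e0 * (exp e0 - 1) + t\<^sup>2 * e0\<^sup>2 / 2) ^ r \<le> exp (- L)"
    using exponent eps L by (simp add: exp_of_nat_mult[symmetric] exp_add[symmetric] t_def)
  also have "exp (- L) = del / 2" using del by (simp add: L_def exp_minus)
  finally have "exp (- t * eps) * exp (t * e0 * (exp e0 - 1) + t\<^sup>2 * e0\<^sup>2 / 2) ^ r \<le> del / 2" .
  moreover have "real r * (del / (2 * real r)) \<le> del / 2" using del by (cases "r = 0") auto
  ultimately show ?thesis by linarith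
qed

theorem theorem5p4:
  fixes eps del lam :: real and n r :: nat
  assumes "0 < eps" "eps < 1" "0 < del" "del < 1"
    and "lam \<ge> lambda_star n (eps / sqrt (8 * real r * ln (2 / del))) (del / (2 * real r))"
  shows "dp eps del n {0..1} (realsum_shuffled n lam r)"
proof -
  define L where "L = ln (2 / del)"
  define e0 where "e0 = eps / sqrt (8 * real r * L)"
  define d0 where "d0 = del / (2 * real r)"
  define t where "t = 4 * L / eps"
  have "0 \<le> L" using assms by (simp add: L_def)
  then have nonneg: "0 \<le> e0" "0 \<le> d0" "0 \<le> t" using assms by (simp_all add: e0_def d0_def t_def)
  have "dp e0 d0 n UNIV (bitsum_shuffled n lam)"
    using assms(5) by (intro dp_bitsum_of_lambda_star_le nonneg) (simp add: e0_def d0_def L_def)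
  then have "dp eps (real r * d0 + exp (- t * eps) * exp (t * e0 * (exp e0 - 1) + t\<^sup>2 * e0\<^sup>2 / 2) ^ r)
      n {0..1} (realsum_shuffled n lam r)"
    using nonneg by (intro realsum_dp_of_bitsum_dp)
  then show ?thesis
    by (rule dp_mono)
      (use composition_parameters_le[OF assms(1-4), of r, folded L_def, folded e0_def d0_def t_def]
        in simp)
qed

end
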